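(* For each $h\in\{1,2\}$, let $\mathrm{oct}_h\in\mathbb{OCT}_n$ be a non-empty rational octagonal shape represented by the strongly closed octagonal graph $G_h=(\mathcal{N},w_h)$, and let $R_h$ be a subgraph of $G_h$ such that $\mathrm{S\text{-}closure}(R_h)=G_h$. Let $G_1\sqcup G_2=(\mathcal{N},w)$. Then $\mathrm{oct}_1\uplus\mathrm{oct}_2\neq\mathrm{oct}_1\cup\mathrm{oct}_2$ if and only if there exist an arc $(i,j)$ of $R_1$ and an arc $(k,\ell)$ of $R_2$ such that (1a) $w_1(i,j)<w_2(i,j)$; (1b) $w_2(k,\ell)<w_1(k,\ell)$; (2a) $w_1(i,j)+w_2(k,\ell)<w(i,\ell)+w(k,j)$; (2b) $w_1(i,j)+w_2(k,\ell)<w(i,\bar k)+w(\bar\jmath,\ell)$; (3a) $2w_1(i,j)+w_2(k,\ell)<w(i,\ell)+w(i,\bar k)+w(\bar\jmath,j)$; (3b) $2w_1(i,j)+w_2(k,\ell)<w(k,j)+w(\bar\jmath,\ell)+w(i,\bar\imath)$; (4a) $w_1(i,j)+2w_2(k,\ell)<w(i,\ell)+w(\bar\jmath,\ell)+w(k,\bar k)$; (4b) $w_1(i,j)+2w_2(k,\ell)<w(k,j)+w(i,\bar k)+w(\bar\ell,\ell)$.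
   Context: Let $\mathcal{N}=\{0,\dots,2n-1\}$; node $2s$ stands for $+x_{s+1}$ and node $2s+1$ for $-x_{s+1}$. For $i\in\mathcal{N}$, $\bar\imath=i+1$ if $i$ is even and $\bar\imath=i-1$ if $i$ is odd. For $\mathbf{v}\in\mathbb{R}^n$ let $\tilde\pi_{2s}(\mathbf{v})=v_{s+1}$ and $\tilde\pi_{2s+1}(\mathbf{v})=-v_{s+1}$. A graph is $(\mathcal{N},w)$ with $w:\mathcal{N}\times\mathcal{N}\to\mathbb{Q}\cup\{+\infty\}$ ($d<+\infty$, $d+(+\infty)=+\infty$); $(i,j)$ is an arc if $w(i,j)<+\infty$; it is consistent if no cycle has negative total weight; $G\unlhd G'$ iff $w\le w'$ pointwise. An octagonal graph is a consistent graph with $w(i,j)=w(\bar\jmath,\bar\imath)$ for all $i,j$. It is closed if $w(i,i)=0$ and $w(i,j)\le w(i,k)+w(k,j)$ for all $i,j,k$, and strongly closed if moreover $2w(i,j)\le w(i,\bar\imath)+w(\bar\jmath,j)$ for all $i,j$. $\mathrm{S\text{-}closure}(G)$ is the pointwise maximum of all strongly closed octagonal graphs $G'\unlhd G$. $R$ is a subgraph of $G$ if every arc of $R$ is an arc of $G$ with the same weight. A (rational) octagonal shape is a subset of $\mathbb{R}^n$ defined by finitely many constraints $\pm x_i\le b$, $\pm x_i\pm x_j\le b$ with $b\in\mathbb{Q}$; $\mathbb{OCT}_n$ is the set of them. An octagonal graph $G$ represents $\{\mathbf{x}\in\mathbb{R}^n : \tilde\pi_i(\mathbf{x})-\tilde\pi_j(\mathbf{x})\le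 w(i,j)\ \forall i,j\in\mathcal{N}\}$. $G_1\sqcup G_2=(\mathcal{N},\max(w_1,w_2))$ pointwise. $\mathrm{oct}_1\uplus\mathrm{oct}_2$ is the least octagonal shape containing $\mathrm{oct}_1\cup\mathrm{oct}_2$, represented by $G_1\sqcup G_2$. *)

theory Defs
  imports "HOL-Analysis.Analysis" "HOL-Library.FuncSet"
begin

text \<open>Nodes are the naturals 0..<2n; node 2s stands for +x_(s+1), node 2s+1 for -x_(s+1).
  Points of R^n are extensional functions on {0..<n} (coordinate s is x_(s+1)).\<close>

definition bar :: "nat \<Rightarrow> nat" where
  "bar i = (if even i then i + 1 else i - 1)"

definition pi_node :: "nat \<Rightarrow> (nat \<Rightarrow> real) \<Rightarrow> real" where
  "pi_node i v = (if even i then v (i div 2) else - v (i div 2))"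

type_synonym graph = "nat \<Rightarrow> nat \<Rightarrow> ereal"

definition nodes :: "nat \<Rightarrow> nat set" where
  "nodes n = {0..<2*n}"

definition Rn :: "nat \<Rightarrow> (nat \<Rightarrow> real) set" where
  "Rn n = PiE {0..<n} (\<lambda>_. UNIV)"

definition is_graph :: "nat \<Rightarrow> graph \<Rightarrow> bool" where
  "is_graph n w \<longleftrightarrow> (\<forall>i\<in>nodes n. \<forall>j\<in>nodes n.
      w i j = \<infinity> \<or> (\<exists>q::rat. w i j = ereal (of_rat q)))"

definition is_arc :: "graph \<Rightarrow> nat \<Rightarrow> nat \<Rightarrow> bool" where
  "is_arc w i j \<longleftrightarrow> w i j < \<infinity>"

definition cycle_weight :: "graph \<Rightarrow> nat list \<Rightarrow> ereal" where
  "cycle_weight w cs = sum_list (map (\<lambda>(a, b). w a b) (zip cs (tl cs @ [hd cs])))"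

definition consistent :: "nat \<Rightarrow> graph \<Rightarrow> bool" where
  "consistent n w \<longleftrightarrow> (\<forall>cs. cs \<noteq> [] \<and> set cs \<subseteq> nodes n \<longrightarrow> 0 \<le> cycle_weight w cs)"

definition graph_le :: "nat \<Rightarrow> graph \<Rightarrow> graph \<Rightarrow> bool" where
  "graph_le n w w' \<longleftrightarrow> (\<forall>i\<in>nodes n. \<forall>j\<in>nodes n. w i j \<le> w' i j)"

definition octagonal :: "nat \<Rightarrow> graph \<Rightarrow> bool" where
  "octagonal n w \<longleftrightarrow> is_graph n w \<and> consistent n w \<and>
     (\<forall>i\<in>nodes n. \<forall>j\<in>nodes n. w i j = w (bar j) (bar i))"

definition closed_graph :: "nat \<Rightarrow> graph \<Rightarrow> bool" where
  "closed_graph n w \<longleftrightarrow> (\<forall>i\<in>nodes n. w i i = 0) \<and>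
     (\<forall>i\<in>nodes n. \<forall>j\<in>nodes n. \<forall>k\<in>nodes n. w i j \<le> w i k + w k j)"

definition strongly_closed :: "nat \<Rightarrow> graph \<Rightarrow> bool" where
  "strongly_closed n w \<longleftrightarrow> closed_graph n w \<and>
     (\<forall>i\<in>nodes n. \<forall>j\<in>nodes n. 2 * w i j \<le> w i (bar i) + w (bar j) j)"

definition S_closure :: "nat \<Rightarrow> graph \<Rightarrow> graph" where
  "S_closure n w = (\<lambda>i j. SUP w' \<in> {w'. octagonal n w' \<and> strongly_closed n w' \<and> graph_le n w' w}. w' i j)"

definition subgraph :: "nat \<Rightarrow> graph \<Rightarrow> graph \<Rightarrow> bool" where
  "subgraph n r g \<longleftrightarrow> (\<forall>i\<in>nodes n. \<forall>j\<in>nodes n. is_arc r i j \<longrightarrow> is_arc g i j \<and> r i j = g i j)"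

definition gamma :: "nat \<Rightarrow> graph \<Rightarrow> (nat \<Rightarrow> real) set" where
  "gamma n w = {x \<in> Rn n. \<forall>i\<in>nodes n. \<forall>j\<in>nodes n. ereal (pi_node i x - pi_node j x) \<le> w i j}"

text \<open>Rational octagonal shapes: finitely many constraints pi_i(x) - pi_j(x) <= b with b rational
  (this covers +-x_i +- x_j <= b, and +-x_i <= b written as +-2x_i <= 2b).\<close>
definition oct_shape :: "nat \<Rightarrow> (nat \<Rightarrow> real) set \<Rightarrow> bool" where
  "oct_shape n S \<longleftrightarrow> (\<exists>C :: (nat \<times> nat \<times> rat) set. finite C \<and>
      (\<forall>(i, j, b)\<in>C. i \<in> nodes n \<and> j \<in> nodes n) \<and>
      S = {x \<in> Rn n. \<forall>(i, j, b)\<in>C. pi_node i x - pi_node j x \<le> of_rat b})"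

definition oct_hull :: "nat \<Rightarrow> (nat \<Rightarrow> real) set \<Rightarrow> (nat \<Rightarrow> real) set" where
  "oct_hull n A = \<Inter> {S. oct_shape n S \<and> A \<subseteq> S}"

definition graph_join :: "graph \<Rightarrow> graph \<Rightarrow> graph" where
  "graph_join w1 w2 = (\<lambda>i j. max (w1 i j) (w2 i j))"

end

theory Submission
  imports Defs
begin

text \<open>The join \<open>w = w1 \<squnion> w2\<close> is again strongly closed, and strong closure makes every weight
  tight, so \<open>gamma n w\<close> is the octagonal hull of the union: the hull differs from the union iff some
  point \<open>p\<close> of \<open>gamma n w\<close> lies in neither shape. Since \<open>S-closure(R\<^sub>h) = G\<^sub>h\<close>, such a \<open>p\<close> violates an
  arc \<open>(i, j)\<close> of \<open>R1\<close> and an arc \<open>(k, l)\<close> of \<open>R2\<close>, and regrouping the two violated differences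
  along arcs of \<open>w\<close> gives the eight inequalities. Conversely, with \<open>w1 i j\<close>, \<open>w2 k l\<close> raised
  slightly to \<open>a\<close>, \<open>b\<close>, the eight inequalities are exactly what keeps \<open>w\<close> free of negative cycles
  when the constraints \<open>a \<le> pi_node i x - pi_node j x\<close> and \<open>b \<le> pi_node k x - pi_node l x\<close> are added
  to it one mirrored pair at a time; a potential of the resulting closed graph is a point of
  \<open>gamma n w\<close> outside both shapes.\<close>

lemma ereal_two_times: "(2::ereal) * x = x + x"
  by (cases x) auto

lemma bar_bar [simp]: "bar (bar i) = i"
  by (simp add: bar_def)

lemma bar_in_nodes: "i \<in> nodes n \<Longrightarrow> bar i \<in> nodes n"
  unfolding bar_def nodes_def by (auto elim!: oddE)

lemma pi_node_bar [simp]: "pi_node (bar i) x = - pi_node i x"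
  unfolding pi_node_def bar_def by (auto elim!: oddE)

lemma finite_nodes [simp]: "finite (nodes n)"
  by (simp add: nodes_def)

section \<open>Closed graphs and their points\<close>

definition coherent :: "nat \<Rightarrow> graph \<Rightarrow> bool" where
  "coherent n w \<longleftrightarrow> (\<forall>i\<in>nodes n. \<forall>j\<in>nodes n. w i j = w (bar j) (bar i))"

definition proper_closed :: "nat \<Rightarrow> graph \<Rightarrow> bool" where
  "proper_closed n g \<longleftrightarrow> closed_graph n g \<and> (\<forall>x\<in>nodes n. \<forall>y\<in>nodes n. g x y \<noteq> -\<infinity>)"

lemma proper_closedI:
  assumes "\<And>x. x \<in> nodes n \<Longrightarrow> g x x = 0"
    and "\<And>x y. x \<in> nodes n \<Longrightarrow> y \<in> nodes n \<Longrightarrow> g x y \<noteq> -\<infinity>"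
    and "\<And>x y z. x \<in> nodes n \<Longrightarrow> y \<in> nodes n \<Longrightarrow> z \<in> nodes n \<Longrightarrow> g x y \<le> g x z + g z y"
  shows "proper_closed n g"
  using assms by (simp add: proper_closed_def closed_graph_def)

lemma
  assumes "proper_closed n g"
  shows proper_closed_diag: "x \<in> nodes n \<Longrightarrow> g x x = 0"
    and proper_closed_not_minf: "x \<in> nodes n \<Longrightarrow> y \<in> nodes n \<Longrightarrow> g x y \<noteq> -\<infinity>"
    and proper_closed_triangle:
      "x \<in> nodes n \<Longrightarrow> y \<in> nodes n \<Longrightarrow> z \<in> nodes n \<Longrightarrow> g x y \<le> g x z + g z y"
  using assms by (auto simp: proper_closed_def closed_graph_def)

definition add_arc :: "graph \<Rightarrow> nat \<Rightarrow> nat \<Rightarrow> ereal \<Rightarrow> graph" where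
  "add_arc g s t c = (\<lambda>x y. min (g x y) (g x s + c + g t y))"

lemma add_arc_le: "add_arc g s t c x y \<le> g x y"
  by (simp add: add_arc_def)

lemma add_arc_at: "g s s \<le> 0 \<Longrightarrow> g t t \<le> 0 \<Longrightarrow> add_arc g s t c s t \<le> c"
  unfolding add_arc_def using add_mono[of "g s s" 0 "c + g t t" c] add_left_mono[of "g t t" 0 c]
  by (simp add: add.assoc min.coboundedI2)

lemma le_min_add_min:
  "(m::ereal) \<le> a + c \<Longrightarrow> m \<le> a + d \<Longrightarrow> m \<le> b + c \<Longrightarrow> m \<le> b + d \<Longrightarrow> m \<le> min a b + min c d"
  by (simp add: min_def)

text \<open>If the new arc closes no negative cycle (\<open>0 \<le> g t s + c\<close>), a shortest path uses it at most
  once, so a single minimum restores closure.\<close>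

lemma proper_closed_add_arc:
  assumes g: "proper_closed n g" and s: "s \<in> nodes n" and t: "t \<in> nodes n"
    and c: "c \<noteq> -\<infinity>" and cycle: "0 \<le> g t s + c"
  shows "proper_closed n (add_arc g s t c)"
proof (rule proper_closedI)
  note tri = proper_closed_triangle[OF g]
  have cycle_via: "0 \<le> g t x + g x s + c" if "x \<in> nodes n" for x
    using cycle add_right_mono[OF tri[OF t s that], of c] by (simp add: add.assoc)
  fix x assume x: "x \<in> nodes n"
  show "add_arc g s t c x x = 0"
    using cycle_via[OF x] proper_closed_diag[OF g x] by (simp add: add_arc_def ac_simps)
  fix y assume y: "y \<in> nodes n"
  show "add_arc g s t c x y \<noteq> -\<infinity>"
    using proper_closed_not_minf[OF g] x y s t c by (auto simp: add_arc_def min_def)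
  fix z assume z: "z \<in> nodes n"
  show "add_arc g s t c x y \<le> add_arc g s t c x z + add_arc g s t c z y"
    unfolding add_arc_def
  proof (rule le_min_add_min)
    show "min (g x y) (g x s + c + g t y) \<le> g x z + g z y"
      using tri[OF x y z] by (simp add: min.coboundedI1)
    have "g x s + c + g t y \<le> g x z + (g z s + c + g t y)"
      using add_right_mono[OF tri[OF x s z], of "c + g t y"] by (simp add: ac_simps)
    then show "min (g x y) (g x s + c + g t y) \<le> g x z + (g z s + c + g t y)"
      by (simp add: min.coboundedI2)
    have "g x s + c + g t y \<le> g x s + c + g t z + g z y"
      using add_left_mono[OF tri[OF t y z], of "g x s + c"] by (simp add: ac_simps)
    then show "min (g x y) (g x s + c + g t y) \<le> g x s + c + g t z + g z y"
      by (simp add: min.coboundedI2)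
    have "g x s + c + g t y + 0 \<le> g x s + c + g t y + (g t z + g z s + c)"
      by (rule add_left_mono[OF cycle_via[OF z]])
    then show "min (g x y) (g x s + c + g t y) \<le> g x s + c + g t z + (g z s + c + g t y)"
      by (simp add: min.coboundedI2 ac_simps)
  qed
qed

definition rat_or_inf :: "ereal \<Rightarrow> bool" where
  "rat_or_inf t \<longleftrightarrow> t = \<infinity> \<or> (\<exists>r\<in>\<rat>. t = ereal r)"

lemma is_graph_iff_rat_or_inf: "is_graph n w \<longleftrightarrow> (\<forall>i\<in>nodes n. \<forall>j\<in>nodes n. rat_or_inf (w i j))"
  unfolding is_graph_def rat_or_inf_def Rats_def by auto

lemma rat_or_inf_add: "rat_or_inf a \<Longrightarrow> rat_or_inf b \<Longrightarrow> rat_or_inf (a + b)"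
  unfolding rat_or_inf_def by (auto intro: Rats_add)

lemma rat_or_inf_min: "rat_or_inf a \<Longrightarrow> rat_or_inf b \<Longrightarrow> rat_or_inf (min a b)"
  by (simp add: min_def)

lemma rat_or_inf_max: "rat_or_inf a \<Longrightarrow> rat_or_inf b \<Longrightarrow> rat_or_inf (max a b)"
  by (simp add: max_def)

lemma rat_or_inf_not_minf: "rat_or_inf a \<Longrightarrow> a \<noteq> -\<infinity>"
  unfolding rat_or_inf_def by auto

text \<open>The potential \<open>P x = min\<^sub>y g x y\<close> is one of the weights, hence rational for a rational graph.\<close>

lemma proper_closed_potential:
  assumes g: "proper_closed n g"
  obtains P where "\<And>x y. x \<in> nodes n \<Longrightarrow> y \<in> nodes n \<Longrightarrow> ereal (P x - P y) \<le> g x y"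
    and "(\<forall>x\<in>nodes n. \<forall>y\<in>nodes n. rat_or_inf (g x y)) \<Longrightarrow> \<forall>x\<in>nodes n. P x \<in> \<rat>"
proof -
  define M where "M x = Min (g x ` nodes n)" for x
  have M_in: "M x \<in> g x ` nodes n" if "x \<in> nodes n" for x
    unfolding M_def using that by (intro Min_in) auto
  have M_le: "M x \<le> g x y" if "y \<in> nodes n" for x y
    unfolding M_def using that by (intro Min_le) auto
  define P where "P x = real_of_ereal (M x)" for x
  have M_real: "M x = ereal (P x)" if x: "x \<in> nodes n" for x
  proof -
    have "M x \<le> 0" using M_le[OF x, of x] proper_closed_diag[OF g x] by simp
    moreover have "M x \<noteq> -\<infinity>" using M_in[OF x] proper_closed_not_minf[OF g x] by (metis imageE)
    ultimately show ?thesis unfolding P_def by (cases "M x") auto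
  qed
  show ?thesis
  proof
    fix x y assume x: "x \<in> nodes n" and y: "y \<in> nodes n"
    obtain a where a: "a \<in> nodes n" and ya: "M y = g y a" using M_in[OF y] by auto
    have "ereal (P x) \<le> g x a" using M_le[OF a, of x] M_real[OF x] by simp
    also have "\<dots> \<le> g x y + g y a" by (rule proper_closed_triangle[OF g x a y])
    also have "\<dots> = g x y + ereal (P y)" using ya M_real[OF y] by simp
    finally show "ereal (P x - P y) \<le> g x y" by (cases "g x y") auto
  next
    assume rat: "\<forall>x\<in>nodes n. \<forall>y\<in>nodes n. rat_or_inf (g x y)"
    show "\<forall>x\<in>nodes n. P x \<in> \<rat>"
    proof
      fix x assume x: "x \<in> nodes n"
      then obtain a where a: "a \<in> nodes n" and xa: "M x = g x a" using M_in by auto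
      have "rat_or_inf (g x a)" using rat x a by blast
      then have "rat_or_inf (ereal (P x))" using xa M_real[OF x] by simp
      then show "P x \<in> \<rat>" by (simp add: rat_or_inf_def)
    qed
  qed
qed

lemma ereal_half_sum_le_max:
  "ereal s \<le> U \<Longrightarrow> ereal t \<le> V \<Longrightarrow> ereal ((s + t) / 2) \<le> max U V"
proof -
  assume "ereal s \<le> U" "ereal t \<le> V"
  then have "max (ereal s) (ereal t) \<le> max U V"
    by (rule max.mono)
  moreover have "ereal ((s + t) / 2) \<le> max (ereal s) (ereal t)" by (simp add: le_max_iff_disj) linarith
  ultimately show ?thesis by (rule order_trans[rotated])
qed

text \<open>Symmetrising a potential \<open>P\<close> to \<open>p v = (P v - P (bar v)) / 2\<close> makes it a point of \<open>\<real>\<^sup>n\<close>.\<close>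

lemma proper_closed_point:
  assumes u: "proper_closed n u"
  obtains x where "x \<in> Rn n"
    and "\<And>a b. a \<in> nodes n \<Longrightarrow> b \<in> nodes n \<Longrightarrow>
           ereal (pi_node a x - pi_node b x) \<le> max (u a b) (u (bar b) (bar a))"
    and "(\<forall>a\<in>nodes n. \<forall>b\<in>nodes n. rat_or_inf (u a b)) \<Longrightarrow> \<forall>a\<in>nodes n. pi_node a x \<in> \<rat>"
proof -
  obtain P where P: "\<And>x y. x \<in> nodes n \<Longrightarrow> y \<in> nodes n \<Longrightarrow> ereal (P x - P y) \<le> u x y"
    and P_rat: "(\<forall>x\<in>nodes n. \<forall>y\<in>nodes n. rat_or_inf (u x y)) \<Longrightarrow> \<forall>x\<in>nodes n. P x \<in> \<rat>"
    using proper_closed_potential[OF u] by blast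
  define x where "x s = (if s < n then (P (2 * s) - P (2 * s + 1)) / 2 else undefined)" for s
  have pi_x: "pi_node a x = (P a - P (bar a)) / 2" if "a \<in> nodes n" for a
    using that by (auto simp: pi_node_def x_def bar_def nodes_def field_simps elim!: evenE oddE)
  show ?thesis
  proof
    show "x \<in> Rn n" by (simp add: Rn_def x_def PiE_def extensional_def)
  next
    fix a b assume a: "a \<in> nodes n" and b: "b \<in> nodes n"
    have diff: "pi_node a x - pi_node b x = ((P a - P b) + (P (bar b) - P (bar a))) / 2"
      using pi_x[OF a] pi_x[OF b] by argo
    show "ereal (pi_node a x - pi_node b x) \<le> max (u a b) (u (bar b) (bar a))"
      unfolding diff by (rule ereal_half_sum_le_max[OF P[OF a b] P[OF bar_in_nodes[OF b] bar_in_nodes[OF a]]])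
  next
    assume "\<forall>a\<in>nodes n. \<forall>b\<in>nodes n. rat_or_inf (u a b)"
    then have "P a \<in> \<rat>" if "a \<in> nodes n" for a
      using P_rat that by blast
    then show "\<forall>a\<in>nodes n. pi_node a x \<in> \<rat>"
      by (simp add: pi_x bar_in_nodes Rats_divide Rats_diff)
  qed
qed

lemma point_in_gamma:
  assumes x: "x \<in> Rn n"
    and bound: "\<And>a b. a \<in> nodes n \<Longrightarrow> b \<in> nodes n \<Longrightarrow>
           ereal (pi_node a x - pi_node b x) \<le> max (u a b) (u (bar b) (bar a))"
    and below: "\<And>a b. a \<in> nodes n \<Longrightarrow> b \<in> nodes n \<Longrightarrow> u a b \<le> w a b"
    and w: "coherent n w"
  shows "x \<in> gamma n w"
  unfolding gamma_def
proof (intro CollectI conjI x ballI)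
  fix a b assume a: "a \<in> nodes n" and b: "b \<in> nodes n"
  have "max (u a b) (u (bar b) (bar a)) \<le> w a b"
    using below[OF a b] below[OF bar_in_nodes[OF b] bar_in_nodes[OF a]] w a b
    by (simp add: coherent_def)
  then show "ereal (pi_node a x - pi_node b x) \<le> w a b"
    using bound[OF a b] by (rule order_trans[rotated])
qed

lemma proper_closed_path_le:
  assumes g: "proper_closed n g"
  shows "set (a # xs @ [b]) \<subseteq> nodes n \<Longrightarrow>
    g a b \<le> sum_list (map (\<lambda>(x, y). g x y) (zip (a # xs) (xs @ [b])))"
proof (induction xs arbitrary: a)
  case (Cons y ys)
  have "g a b \<le> g a y + g y b"
    using Cons.prems by (auto intro: proper_closed_triangle[OF g])
  also have "\<dots> \<le> g a y + sum_list (map (\<lambda>(x, y). g x y) (zip (y # ys) (ys @ [b])))"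
    using Cons by (intro add_left_mono) auto
  finally show ?case by simp
qed simp

lemma proper_closed_consistent:
  assumes g: "proper_closed n g"
  shows "consistent n g"
  unfolding consistent_def
proof (intro allI impI)
  fix cs assume cs: "cs \<noteq> [] \<and> set cs \<subseteq> nodes n"
  then obtain c cs' where c: "cs = c # cs'" by (cases cs) auto
  have "g c c \<le> sum_list (map (\<lambda>(x, y). g x y) (zip (c # cs') (cs' @ [c])))"
    using cs c by (intro proper_closed_path_le[OF g]) auto
  then show "0 \<le> cycle_weight g cs"
    using proper_closed_diag[OF g] cs c by (simp add: cycle_weight_def)
qed

section \<open>Strongly closed graphs and the octagonal hull\<close>

text \<open>Strongly closed octagonal graphs, without the rationality of the weights.\<close>

definition strongly_closed_coherent :: "nat \<Rightarrow> graph \<Rightarrow> bool" where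
  "strongly_closed_coherent n w \<longleftrightarrow> proper_closed n w \<and> coherent n w \<and>
     (\<forall>i\<in>nodes n. \<forall>j\<in>nodes n. 2 * w i j \<le> w i (bar i) + w (bar j) j)"

lemma strongly_closed_coherentI:
  assumes "octagonal n w" and "strongly_closed n w"
  shows "strongly_closed_coherent n w"
proof -
  have "w i j \<noteq> -\<infinity>" if "i \<in> nodes n" "j \<in> nodes n" for i j
    using assms(1) that unfolding octagonal_def is_graph_def by force
  then show ?thesis
    using assms unfolding strongly_closed_coherent_def proper_closed_def coherent_def
      octagonal_def strongly_closed_def by blast
qed

lemma octagonal_if_strongly_closed_coherent:
  assumes "strongly_closed_coherent n w" and "is_graph n w"
  shows "octagonal n w" and "strongly_closed n w"
  using assms proper_closed_consistent[of n w]
  unfolding strongly_closed_coherent_def octagonal_def strongly_closed_def coherent_def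
    proper_closed_def by blast+

lemma max_le_max_add_max: "(a::ereal) \<le> c + e \<Longrightarrow> b \<le> d + f \<Longrightarrow> max a b \<le> max c d + max e f"
  by (meson add_mono max.bounded_iff max.cobounded1 max.cobounded2 order_trans)

lemma ereal_two_times_max: "2 * max (a::ereal) b = max (2 * a) (2 * b)"
  by (cases a; cases b) (auto simp: max_def)

lemma strongly_closed_coherent_join:
  assumes w1: "strongly_closed_coherent n w1" and w2: "strongly_closed_coherent n w2"
  shows "strongly_closed_coherent n (graph_join w1 w2)"
  unfolding strongly_closed_coherent_def
proof (intro conjI proper_closedI)
  have c1: "proper_closed n w1" and c2: "proper_closed n w2"
    using w1 w2 by (simp_all add: strongly_closed_coherent_def)
  show "coherent n (graph_join w1 w2)"
    using w1 w2 by (simp add: strongly_closed_coherent_def coherent_def graph_join_def)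
  show "\<forall>i\<in>nodes n. \<forall>j\<in>nodes n.
      2 * graph_join w1 w2 i j \<le> graph_join w1 w2 i (bar i) + graph_join w1 w2 (bar j) j"
    using w1 w2 unfolding graph_join_def ereal_two_times_max strongly_closed_coherent_def
    by (blast intro: max_le_max_add_max)
  fix x assume x: "x \<in> nodes n"
  show "graph_join w1 w2 x x = 0"
    by (simp add: graph_join_def proper_closed_diag[OF c1 x] proper_closed_diag[OF c2 x])
  fix y assume y: "y \<in> nodes n"
  show "graph_join w1 w2 x y \<noteq> -\<infinity>"
    using proper_closed_not_minf[OF c1 x y] by (simp add: graph_join_def max_def) force
  fix z assume z: "z \<in> nodes n"
  show "graph_join w1 w2 x y \<le> graph_join w1 w2 x z + graph_join w1 w2 z y"
    unfolding graph_join_def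
    by (intro max_le_max_add_max proper_closed_triangle[OF c1 x y z] proper_closed_triangle[OF c2 x y z])
qed

lemma is_graph_join: "is_graph n w1 \<Longrightarrow> is_graph n w2 \<Longrightarrow> is_graph n (graph_join w1 w2)"
  by (simp add: is_graph_iff_rat_or_inf graph_join_def rat_or_inf_max)

definition diff_graph :: "(nat \<Rightarrow> real) \<Rightarrow> graph" where
  "diff_graph x = (\<lambda>a b. ereal (pi_node a x - pi_node b x))"

lemma strongly_closed_coherent_diff_graph: "strongly_closed_coherent n (diff_graph x)"
  by (auto simp: strongly_closed_coherent_def coherent_def diff_graph_def intro!: proper_closedI)

lemma ereal_double_le:
  assumes c: "ereal c \<le> y" and strong: "2 * y \<le> p + q"
  shows "ereal (2 * c) \<le> p + q"
proof -
  have "ereal (2 * c) = ereal c + ereal c" by simp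
  also have "\<dots> \<le> y + y" by (rule add_mono[OF c c])
  also have "\<dots> = 2 * y" by (simp only: ereal_two_times)
  finally show ?thesis using strong by (rule order_trans)
qed

text \<open>Imposes \<open>a \<le> pi_node i x - pi_node j x\<close> through the arcs \<open>j \<rightarrow> i\<close> and \<open>bar i \<rightarrow> bar j\<close> of
  weight \<open>-a\<close>.\<close>

definition add_pair :: "graph \<Rightarrow> nat \<Rightarrow> nat \<Rightarrow> real \<Rightarrow> graph" where
  "add_pair g i j a = add_arc (add_arc g j i (ereal (-a))) (bar i) (bar j) (ereal (-a))"

lemma add_pair_le: "add_pair g i j a x y \<le> g x y"
  unfolding add_pair_def by (meson add_arc_le order_trans)

lemma add_pair_at:
  assumes g: "proper_closed n g" and i: "i \<in> nodes n" and j: "j \<in> nodes n"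
  shows "add_pair g i j a j i \<le> ereal (-a)" and "add_pair g i j a (bar i) (bar j) \<le> ereal (-a)"
proof -
  have diag: "add_arc g j i (ereal (-a)) x x \<le> 0" if "x \<in> nodes n" for x
    using add_arc_le[of g j i _ x x] proper_closed_diag[OF g that] by simp
  have "add_arc g j i (ereal (-a)) j i \<le> ereal (-a)"
    using proper_closed_diag[OF g i] proper_closed_diag[OF g j] by (intro add_arc_at) auto
  then show "add_pair g i j a j i \<le> ereal (-a)"
    unfolding add_pair_def by (meson add_arc_le order_trans)
  show "add_pair g i j a (bar i) (bar j) \<le> ereal (-a)"
    unfolding add_pair_def by (intro add_arc_at diag bar_in_nodes i j)
qed

lemma proper_closed_add_pair:
  assumes g: "proper_closed n g" and i: "i \<in> nodes n" and j: "j \<in> nodes n"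
    and le_ij: "ereal a \<le> g i j" and le_bar: "ereal a \<le> g (bar j) (bar i)"
    and le_double: "ereal (2 * a) \<le> g i (bar i) + g (bar j) j"
  shows "proper_closed n (add_pair g i j a)"
proof -
  define u where "u = add_arc g j i (ereal (-a))"
  have "ereal a + ereal (-a) \<le> g i j + ereal (-a)"
    using le_ij by (rule add_right_mono)
  then have u: "proper_closed n u"
    unfolding u_def by (intro proper_closed_add_arc[OF g j i]) (auto simp: zero_ereal_def)
  have "ereal a \<le> g (bar j) j + ereal (-a) + g i (bar i)"
    using le_double by (cases "g (bar j) j"; cases "g i (bar i)") auto
  with le_bar have "ereal a \<le> u (bar j) (bar i)"
    by (simp add: u_def add_arc_def)
  then have "0 \<le> u (bar j) (bar i) + ereal (-a)"
    by (cases "u (bar j) (bar i)") auto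
  then show ?thesis
    unfolding add_pair_def u_def[symmetric]
    by (intro proper_closed_add_arc[OF u bar_in_nodes[OF i] bar_in_nodes[OF j]]) auto
qed

lemma strongly_closed_coherent_tight:
  assumes w: "strongly_closed_coherent n w" and i: "i \<in> nodes n" and j: "j \<in> nodes n"
    and less: "ereal b < w i j"
  obtains p where "p \<in> gamma n w" and "b < pi_node i p - pi_node j p"
proof -
  have cl: "proper_closed n w" and coh: "coherent n w"
    and strong: "2 * w i j \<le> w i (bar i) + w (bar j) j"
    using w i j by (auto simp: strongly_closed_coherent_def)
  define c where "c = (if w i j = \<infinity> then b + 1 else real_of_ereal (w i j))"
  have c: "ereal c \<le> w i j" and bc: "b < c"
    using less proper_closed_not_minf[OF cl i j] unfolding c_def by (cases "w i j"; simp)+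
  define u where "u = add_pair w i j c"
  have u: "proper_closed n u"
    unfolding u_def
  proof (rule proper_closed_add_pair[OF cl i j c])
    show "ereal c \<le> w (bar j) (bar i)" using c coh i j by (simp add: coherent_def)
    show "ereal (2 * c) \<le> w i (bar i) + w (bar j) j"
      by (rule ereal_double_le[OF c strong])
  qed
  obtain x where x: "x \<in> Rn n"
    and bound: "\<And>a b. a \<in> nodes n \<Longrightarrow> b \<in> nodes n \<Longrightarrow>
           ereal (pi_node a x - pi_node b x) \<le> max (u a b) (u (bar b) (bar a))"
    by (rule proper_closed_point[OF u]) (rule that)
  have u_le: "u a b \<le> w a b" if "a \<in> nodes n" "b \<in> nodes n" for a b
    unfolding u_def by (rule add_pair_le)
  have "x \<in> gamma n w"
    by (rule point_in_gamma[OF x bound u_le coh])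
  moreover have "max (u j i) (u (bar i) (bar j)) \<le> ereal (-c)"
    using add_pair_at[OF cl i j, of c] by (simp add: u_def)
  then have "ereal (pi_node j x - pi_node i x) \<le> ereal (-c)"
    using bound[OF j i] by (rule order_trans[rotated])
  ultimately show ?thesis
    using bc by (intro that[of x]) auto
qed

lemma oct_shape_gamma:
  assumes w: "is_graph n w"
  shows "oct_shape n (gamma n w)"
  unfolding oct_shape_def
proof (intro exI conjI)
  define C where "C = {(i, j, q). i \<in> nodes n \<and> j \<in> nodes n \<and> w i j = ereal (of_rat q)}"
  have "inj_on (\<lambda>(i, j, q). (i, j)) C"
    by (auto simp: C_def inj_on_def)
  moreover have "(\<lambda>(i, j, q). (i, j)) ` C \<subseteq> nodes n \<times> nodes n"
    by (auto simp: C_def)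
  ultimately show "finite C"
    by (metis finite_SigmaI finite_imageD finite_nodes finite_subset)
  show "\<forall>(i, j, b)\<in>C. i \<in> nodes n \<and> j \<in> nodes n"
    by (auto simp: C_def)
  show "gamma n w = {x \<in> Rn n. \<forall>(i, j, b)\<in>C. pi_node i x - pi_node j x \<le> of_rat b}"
  proof (intro set_eqI iffI)
    fix x assume "x \<in> gamma n w"
    then show "x \<in> {x \<in> Rn n. \<forall>(i, j, b)\<in>C. pi_node i x - pi_node j x \<le> of_rat b}"
      by (force simp: gamma_def C_def)
  next
    fix x assume x: "x \<in> {x \<in> Rn n. \<forall>(i, j, b)\<in>C. pi_node i x - pi_node j x \<le> of_rat b}"
    have "ereal (pi_node i x - pi_node j x) \<le> w i j" if "i \<in> nodes n" "j \<in> nodes n" for i j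
      using w that x unfolding is_graph_def C_def by fastforce
    then show "x \<in> gamma n w"
      using x by (simp add: gamma_def)
  qed
qed

lemma shape_constraint_bound:
  assumes w: "strongly_closed_coherent n w"
    and sub: "gamma n w \<subseteq> {x \<in> Rn n. \<forall>(i, j, b)\<in>C. pi_node i x - pi_node j x \<le> of_rat b}"
    and ijb: "(i, j, b) \<in> C" and i: "i \<in> nodes n" and j: "j \<in> nodes n"
  shows "w i j \<le> ereal (of_rat b)"
proof (rule ccontr)
  assume "\<not> w i j \<le> ereal (of_rat b)"
  then obtain p where "p \<in> gamma n w" and "of_rat b < pi_node i p - pi_node j p"
    using strongly_closed_coherent_tight[OF w i j] by (metis linorder_not_le)
  with sub ijb show False by fastforce
qed

lemma gamma_join_subset_oct_hull:
  assumes w1: "strongly_closed_coherent n w1" and w2: "strongly_closed_coherent n w2"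
  shows "gamma n (graph_join w1 w2) \<subseteq> oct_hull n (gamma n w1 \<union> gamma n w2)"
  unfolding oct_hull_def
proof (intro subsetI InterI, elim CollectE conjE)
  fix x S assume x: "x \<in> gamma n (graph_join w1 w2)"
    and S: "oct_shape n S" and sub: "gamma n w1 \<union> gamma n w2 \<subseteq> S"
  then obtain C where C: "\<forall>(i, j, b)\<in>C. i \<in> nodes n \<and> j \<in> nodes n"
    and S_eq: "S = {x \<in> Rn n. \<forall>(i, j, b)\<in>C. pi_node i x - pi_node j x \<le> of_rat b}"
    unfolding oct_shape_def by blast
  have "pi_node i x - pi_node j x \<le> of_rat b" if ijb: "(i, j, b) \<in> C" for i j b
  proof -
    have i: "i \<in> nodes n" and j: "j \<in> nodes n" using C ijb by auto
    have "ereal (pi_node i x - pi_node j x) \<le> max (w1 i j) (w2 i j)"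
      using x i j by (simp add: gamma_def graph_join_def)
    also have "\<dots> \<le> ereal (of_rat b)"
      using shape_constraint_bound[OF w1 _ ijb i j] shape_constraint_bound[OF w2 _ ijb i j] sub S_eq
      by simp
    finally show ?thesis by simp
  qed
  then show "x \<in> S"
    using x by (auto simp: S_eq gamma_def)
qed

lemma gamma_subset_gamma_join: "gamma n w1 \<union> gamma n w2 \<subseteq> gamma n (graph_join w1 w2)"
  by (auto simp: gamma_def graph_join_def intro: le_max_iff_disj[THEN iffD2])

lemma oct_hull_union_gamma:
  assumes "strongly_closed_coherent n w1" "strongly_closed_coherent n w2"
    and "is_graph n w1" "is_graph n w2"
  shows "oct_hull n (gamma n w1 \<union> gamma n w2) = gamma n (graph_join w1 w2)"
proof
  show "oct_hull n (gamma n w1 \<union> gamma n w2) \<subseteq> gamma n (graph_join w1 w2)"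
    using oct_shape_gamma[OF is_graph_join[OF assms(3,4)]] gamma_subset_gamma_join
    by (auto simp: oct_hull_def)
qed (rule gamma_join_subset_oct_hull[OF assms(1,2)])

section \<open>S-closure\<close>

definition add_arcs :: "graph \<Rightarrow> (nat \<times> nat \<times> ereal) list \<Rightarrow> graph" where
  "add_arcs g L = foldl (\<lambda>h (s, t, c). add_arc h s t c) g L"

text \<open>All the added constraints hold at the point \<open>z\<close>, so no negative cycle ever arises.\<close>

lemma proper_closed_add_arcs:
  assumes "proper_closed n g" and "\<forall>a\<in>nodes n. \<forall>b\<in>nodes n. rat_or_inf (g a b)"
    and "\<forall>a\<in>nodes n. \<forall>b\<in>nodes n. diff_graph z a b \<le> g a b"
    and "\<forall>(s, t, c)\<in>set L. s \<in> nodes n \<and> t \<in> nodes n \<and> rat_or_inf c \<and> diff_graph z s t \<le> c"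
  shows "proper_closed n (add_arcs g L) \<and> (\<forall>a\<in>nodes n. \<forall>b\<in>nodes n. rat_or_inf (add_arcs g L a b)) \<and>
    (\<forall>a\<in>nodes n. \<forall>b\<in>nodes n. diff_graph z a b \<le> add_arcs g L a b) \<and>
    (\<forall>a\<in>nodes n. \<forall>b\<in>nodes n. add_arcs g L a b \<le> g a b) \<and> (\<forall>(s, t, c)\<in>set L. add_arcs g L s t \<le> c)"
  using assms
proof (induction L arbitrary: g)
  case Nil
  then show ?case by (simp add: add_arcs_def)
next
  case (Cons e L)
  obtain s t c where e: "e = (s, t, c)" by (cases e)
  have s: "s \<in> nodes n" and t: "t \<in> nodes n" and c: "rat_or_inf c"
    and zc: "diff_graph z s t \<le> c" using Cons.prems(4) e by auto
  define g' where "g' = add_arc g s t c"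
  have step: "add_arcs g (e # L) = add_arcs g' L" by (simp add: add_arcs_def e g'_def)
  have z_below: "diff_graph z a s + c + diff_graph z t b \<le> g a s + c + g t b"
    if "a \<in> nodes n" "b \<in> nodes n" for a b
    using Cons.prems(3) that s t by (intro add_mono) auto
  have "diff_graph z t s + diff_graph z s t \<le> g t s + c"
    using Cons.prems(3) s t zc by (intro add_mono) auto
  then have "proper_closed n g'"
    unfolding g'_def using Cons.prems(1) s t rat_or_inf_not_minf[OF c]
    by (intro proper_closed_add_arc) (auto simp: diff_graph_def zero_ereal_def)
  moreover have "\<forall>a\<in>nodes n. \<forall>b\<in>nodes n. rat_or_inf (g' a b)"
    using Cons.prems(2) s t c by (auto simp: g'_def add_arc_def intro!: rat_or_inf_min rat_or_inf_add)
  moreover have "\<forall>a\<in>nodes n. \<forall>b\<in>nodes n. diff_graph z a b \<le> g' a b"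
  proof (intro ballI)
    fix a b assume a: "a \<in> nodes n" and b: "b \<in> nodes n"
    have "diff_graph z a b = diff_graph z a s + diff_graph z s t + diff_graph z t b"
      by (simp add: diff_graph_def)
    also have "\<dots> \<le> diff_graph z a s + c + diff_graph z t b"
      using zc by (intro add_mono order.refl)
    finally show "diff_graph z a b \<le> g' a b"
      using z_below[OF a b] Cons.prems(3) a b by (simp add: g'_def add_arc_def)
  qed
  ultimately have IH: "proper_closed n (add_arcs g' L) \<and>
    (\<forall>a\<in>nodes n. \<forall>b\<in>nodes n. rat_or_inf (add_arcs g' L a b)) \<and>
    (\<forall>a\<in>nodes n. \<forall>b\<in>nodes n. diff_graph z a b \<le> add_arcs g' L a b) \<and>
    (\<forall>a\<in>nodes n. \<forall>b\<in>nodes n. add_arcs g' L a b \<le> g' a b) \<and> (\<forall>(s, t, c)\<in>set L. add_arcs g' L s t \<le> c)"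
    using Cons.IH Cons.prems(4) by auto
  have "g' s t \<le> c"
    unfolding g'_def using proper_closed_diag[OF Cons.prems(1)] s t by (intro add_arc_at) auto
  then have "add_arcs g' L s t \<le> c"
    using IH s t by (meson order_trans)
  moreover have "\<forall>a\<in>nodes n. \<forall>b\<in>nodes n. add_arcs g' L a b \<le> g a b"
    using IH add_arc_le unfolding g'_def by (meson order_trans)
  ultimately show ?case using IH step e by auto
qed

lemma le_S_closure:
  assumes "octagonal n s" and "strongly_closed n s" and "graph_le n s r"
  shows "s i j \<le> S_closure n r i j"
  unfolding S_closure_def using assms by (intro SUP_upper) auto

lemma subgraph_ge:
  assumes "subgraph n r w" and "i \<in> nodes n" and "j \<in> nodes n"
  shows "w i j \<le> r i j" and "rat_or_inf (w i j) \<Longrightarrow> rat_or_inf (r i j)"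
  using assms unfolding subgraph_def is_arc_def rat_or_inf_def by (cases "is_arc r i j"; force)+

text \<open>The closure of the rational constraints of \<open>r\<close> together with \<open>pi_node j0 x - pi_node i0 x \<le> -q\<close>;
  the point \<open>z\<close> rules out negative cycles, and a potential of the closure is rational.\<close>

lemma rational_point_beyond:
  assumes r_rat: "\<forall>a\<in>nodes n. \<forall>b\<in>nodes n. rat_or_inf (r a b)" and z: "z \<in> gamma n r"
    and i0: "i0 \<in> nodes n" and j0: "j0 \<in> nodes n"
    and q: "q \<in> \<rat>" "q \<le> pi_node i0 z - pi_node j0 z"
  obtains y where "y \<in> gamma n r" and "\<forall>a\<in>nodes n. pi_node a y \<in> \<rat>"
    and "q \<le> pi_node i0 y - pi_node j0 y"
proof -
  have z_r: "diff_graph z a b \<le> r a b" if "a \<in> nodes n" "b \<in> nodes n" for a b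
    using z that by (simp add: gamma_def diff_graph_def)
  define r' where "r' a b = min (r a b) (r (bar b) (bar a))" for a b
  have r'_coherent: "coherent n r'" by (simp add: coherent_def r'_def min.commute)
  have r'_rat: "rat_or_inf (r' a b)" and z_r': "diff_graph z a b \<le> r' a b"
    if "a \<in> nodes n" "b \<in> nodes n" for a b
    using that r_rat z_r[OF that] z_r[OF bar_in_nodes[OF that(2)] bar_in_nodes[OF that(1)]]
    by (auto simp: r'_def diff_graph_def bar_in_nodes intro: rat_or_inf_min)
  define E where "E a b = (if a = b then 0 else (\<infinity>::ereal))" for a b :: nat
  define L where "L = map (\<lambda>(a, b). (a, b, r' a b)) (List.product [0..<2*n] [0..<2*n]) @
     [(j0, i0, ereal (-q)), (bar i0, bar j0, ereal (-q))]"
  have set_L: "set L = (\<lambda>(a, b). (a, b, r' a b)) ` (nodes n \<times> nodes n) \<union>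
      {(j0, i0, ereal (-q)), (bar i0, bar j0, ereal (-q))}"
    unfolding L_def nodes_def by auto
  have E: "proper_closed n E" "\<forall>a\<in>nodes n. \<forall>b\<in>nodes n. rat_or_inf (E a b)"
    "\<forall>a\<in>nodes n. \<forall>b\<in>nodes n. diff_graph z a b \<le> E a b"
    by (auto simp: E_def diff_graph_def rat_or_inf_def intro!: proper_closedI)
  have "\<forall>(s, t, c)\<in>set L. s \<in> nodes n \<and> t \<in> nodes n \<and> rat_or_inf c \<and> diff_graph z s t \<le> c"
    unfolding set_L using i0 j0 bar_in_nodes q r'_rat z_r'
    by (auto simp: rat_or_inf_def diff_graph_def)
  then have u: "proper_closed n (add_arcs E L) \<and>
      (\<forall>a\<in>nodes n. \<forall>b\<in>nodes n. rat_or_inf (add_arcs E L a b)) \<and>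
      (\<forall>(s, t, c)\<in>set L. add_arcs E L s t \<le> c)"
    using proper_closed_add_arcs[OF E] by blast
  then have u_cl: "proper_closed n (add_arcs E L)" by simp
  obtain y where y: "y \<in> Rn n"
    and bound: "\<And>a b. a \<in> nodes n \<Longrightarrow> b \<in> nodes n \<Longrightarrow>
         ereal (pi_node a y - pi_node b y) \<le> max (add_arcs E L a b) (add_arcs E L (bar b) (bar a))"
    and y_rat: "(\<forall>a\<in>nodes n. \<forall>b\<in>nodes n. rat_or_inf (add_arcs E L a b)) \<Longrightarrow>
         \<forall>a\<in>nodes n. pi_node a y \<in> \<rat>"
    by (rule proper_closed_point[OF u_cl]) (rule that)
  show ?thesis
  proof
    have "add_arcs E L a b \<le> r' a b" if "a \<in> nodes n" "b \<in> nodes n" for a b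
    proof -
      have "(a, b, r' a b) \<in> set L" using that by (auto simp: set_L)
      then show ?thesis using u by auto
    qed
    then have "y \<in> gamma n r'"
      by (intro point_in_gamma[OF y bound _ r'_coherent])
    then show "y \<in> gamma n r"
      by (auto simp: gamma_def r'_def)
    show "\<forall>a\<in>nodes n. pi_node a y \<in> \<rat>"
      using y_rat u by blast
    have "max (add_arcs E L j0 i0) (add_arcs E L (bar i0) (bar j0)) \<le> ereal (-q)"
      using u by (auto simp: set_L)
    then have "ereal (pi_node j0 y - pi_node i0 y) \<le> ereal (-q)"
      using bound[OF j0 i0] by (rule order_trans[rotated])
    then show "q \<le> pi_node i0 y - pi_node j0 y" by simp
  qed
qed

text \<open>The S-closure only ranges over rational graphs, so a point of \<open>gamma n r\<close> beyond an arc of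
  \<open>w\<close> is first replaced by a rational one, whose difference graph then lies below \<open>r\<close>.\<close>

lemma gamma_subset_gamma_S_closure:
  assumes w: "strongly_closed_coherent n w" and w_rat: "is_graph n w" and sub: "subgraph n r w"
    and closure: "\<forall>i\<in>nodes n. \<forall>j\<in>nodes n. S_closure n r i j = w i j"
  shows "gamma n r \<subseteq> gamma n w"
proof
  fix z assume z: "z \<in> gamma n r"
  show "z \<in> gamma n w"
  proof (rule ccontr)
    assume "z \<notin> gamma n w"
    then obtain i0 j0 where i0: "i0 \<in> nodes n" and j0: "j0 \<in> nodes n"
      and beyond: "w i0 j0 < diff_graph z i0 j0"
      using z by (auto simp: gamma_def diff_graph_def not_le)
    then obtain v where v: "w i0 j0 = ereal v"
      using w by (cases "w i0 j0") (auto simp: diff_graph_def strongly_closed_coherent_def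
        proper_closed_not_minf)
    obtain q where q: "q \<in> \<rat>" "v < q" "q < pi_node i0 z - pi_node j0 z"
      using Rats_dense_in_real[of v] beyond v by (auto simp: diff_graph_def)
    have r_rat: "rat_or_inf (r a b)" and w_le_r: "w a b \<le> r a b"
      if "a \<in> nodes n" "b \<in> nodes n" for a b
      using subgraph_ge[OF sub that] w_rat that by (auto simp: is_graph_iff_rat_or_inf)
    obtain y where y: "y \<in> gamma n r" and y_rat: "\<forall>a\<in>nodes n. pi_node a y \<in> \<rat>"
      and q_y: "q \<le> pi_node i0 y - pi_node j0 y"
      using rational_point_beyond[of n r z i0 j0 q] r_rat z i0 j0 q by auto
    define s where "s = graph_join w (diff_graph y)"
    have "strongly_closed_coherent n s"
      unfolding s_def by (rule strongly_closed_coherent_join[OF w strongly_closed_coherent_diff_graph])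
    moreover have "is_graph n s"
      unfolding s_def using w_rat y_rat
      by (intro is_graph_join) (auto simp: is_graph_iff_rat_or_inf rat_or_inf_def diff_graph_def)
    moreover have "graph_le n s r"
      using w_le_r y by (simp add: graph_le_def s_def graph_join_def gamma_def diff_graph_def)
    ultimately have "s i0 j0 \<le> S_closure n r i0 j0"
      by (intro le_S_closure octagonal_if_strongly_closed_coherent)
    then have "diff_graph y i0 j0 \<le> ereal v"
      using closure i0 j0 v by (simp add: s_def graph_join_def)
    then show False using q q_y by (simp add: diff_graph_def)
  qed
qed

section \<open>The eight conditions\<close>

definition join_conditions :: "graph \<Rightarrow> graph \<Rightarrow> graph \<Rightarrow> nat \<Rightarrow> nat \<Rightarrow> nat \<Rightarrow> nat \<Rightarrow> bool" where
  "join_conditions w1 w2 w i j k l \<longleftrightarrow>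
     w1 i j < w2 i j \<and>
     w2 k l < w1 k l \<and>
     w1 i j + w2 k l < w i l + w k j \<and>
     w1 i j + w2 k l < w i (bar k) + w (bar j) l \<and>
     2 * w1 i j + w2 k l < w i l + w i (bar k) + w (bar j) j \<and>
     2 * w1 i j + w2 k l < w k j + w (bar j) l + w i (bar i) \<and>
     w1 i j + 2 * w2 k l < w i l + w (bar j) l + w k (bar k) \<and>
     w1 i j + 2 * w2 k l < w k j + w i (bar k) + w (bar l) l"

lemma ereal_less_add:
  assumes "ereal x \<le> X" and "ereal y \<le> Y" and "c < x + y"
  shows "ereal c < X + Y"
proof -
  have "ereal c < ereal (x + y)" using assms(3) by simp
  also have "\<dots> \<le> X + Y" using add_mono[OF assms(1,2)] by simp
  finally show ?thesis .
qed

lemma ereal_less_add3: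
  assumes "ereal x \<le> X" and "ereal y \<le> Y" and "ereal z \<le> Z" and "c < x + y + z"
  shows "ereal c < X + Y + Z"
proof -
  have "ereal c < ereal (x + y + z)" using assms(4) by simp
  also have "\<dots> \<le> X + Y + Z" using add_mono[OF add_mono[OF assms(1,2)] assms(3)] by simp
  finally show ?thesis .
qed

text \<open>Each condition compares the violations at \<open>(i, j)\<close> and \<open>(k, l)\<close> with a regrouping of the
  same coordinate differences along arcs of the join.\<close>

lemma join_conditions_if_beyond:
  fixes w1 w2 :: graph and p :: "nat \<Rightarrow> real"
  defines "w \<equiv> graph_join w1 w2"
  assumes p: "p \<in> gamma n w"
    and nodes: "i \<in> nodes n" "j \<in> nodes n" "k \<in> nodes n" "l \<in> nodes n"
    and A: "w1 i j = ereal A" "A < pi_node i p - pi_node j p"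
    and B: "w2 k l = ereal B" "B < pi_node k p - pi_node l p"
  shows "join_conditions w1 w2 w i j k l"
proof -
  have p_le: "ereal (pi_node x p - pi_node y p) \<le> w x y" if "x \<in> nodes n" "y \<in> nodes n" for x y
    using p that by (simp add: gamma_def)
  note bars = bar_in_nodes[OF nodes(1)] bar_in_nodes[OF nodes(2)] bar_in_nodes[OF nodes(3)]
    bar_in_nodes[OF nodes(4)]
  have "w1 i j < w2 i j"
  proof (rule ccontr)
    assume "\<not> w1 i j < w2 i j"
    then have "w i j = w1 i j" by (simp add: w_def graph_join_def max_def)
    then show False using p_le[OF nodes(1,2)] A by simp
  qed
  moreover have "w2 k l < w1 k l"
  proof (rule ccontr)
    assume "\<not> w2 k l < w1 k l"
    then have "w k l = w2 k l" by (simp add: w_def graph_join_def max_def not_less)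
    then show False using p_le[OF nodes(3,4)] B by simp
  qed
  moreover have "w1 i j + w2 k l < w i l + w k j"
    using ereal_less_add[OF p_le[OF nodes(1,4)] p_le[OF nodes(3,2)]] A B by simp
  moreover have "w1 i j + w2 k l < w i (bar k) + w (bar j) l"
    using ereal_less_add[OF p_le[OF nodes(1) bars(3)] p_le[OF bars(2) nodes(4)]] A B by simp
  moreover have "2 * w1 i j + w2 k l < w i l + w i (bar k) + w (bar j) j"
    using ereal_less_add3[OF p_le[OF nodes(1,4)] p_le[OF nodes(1) bars(3)] p_le[OF bars(2) nodes(2)]]
      A B by simp
  moreover have "2 * w1 i j + w2 k l < w k j + w (bar j) l + w i (bar i)"
    using ereal_less_add3[OF p_le[OF nodes(3,2)] p_le[OF bars(2) nodes(4)] p_le[OF nodes(1) bars(1)]]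
      A B by simp
  moreover have "w1 i j + 2 * w2 k l < w i l + w (bar j) l + w k (bar k)"
    using ereal_less_add3[OF p_le[OF nodes(1,4)] p_le[OF bars(2) nodes(4)] p_le[OF nodes(3) bars(3)]]
      A B by simp
  moreover have "w1 i j + 2 * w2 k l < w k j + w i (bar k) + w (bar l) l"
    using ereal_less_add3[OF p_le[OF nodes(3,2)] p_le[OF nodes(1) bars(3)] p_le[OF bars(4) nodes(4)]]
      A B by simp
  ultimately show ?thesis unfolding join_conditions_def by blast
qed

section \<open>A point beyond both arcs\<close>

definition path_bounds :: "graph \<Rightarrow> (real \<times> (nat \<times> nat) list) list \<Rightarrow> bool" where
  "path_bounds W cs \<longleftrightarrow> (\<forall>(c, ps)\<in>set cs. ereal c \<le> (\<Sum>(x, y)\<leftarrow>ps. W x y))"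

text \<open>The first eight bounds are conditions (1a)--(4b) with \<open>w1 i j\<close>, \<open>w2 k l\<close> raised to \<open>a\<close>, \<open>b\<close>;
  the last six follow from them by strong closure. Together they exclude every negative cycle
  created by imposing \<open>a \<le> pi_node i x - pi_node j x\<close> and \<open>b \<le> pi_node k x - pi_node l x\<close>.\<close>

definition pair_pair_bounds ::
    "nat \<Rightarrow> nat \<Rightarrow> nat \<Rightarrow> nat \<Rightarrow> real \<Rightarrow> real \<Rightarrow> (real \<times> (nat \<times> nat) list) list" where
  "pair_pair_bounds i j k l a b =
    [(a, [(i, j)]), (b, [(k, l)]),
     (a + b, [(i, l), (k, j)]), (a + b, [(i, bar k), (bar j, l)]),
     (2 * a + b, [(i, l), (i, bar k), (bar j, j)]), (2 * a + b, [(k, j), (bar j, l), (i, bar i)]),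
     (a + 2 * b, [(i, l), (bar j, l), (k, bar k)]), (a + 2 * b, [(k, j), (i, bar k), (bar l, l)]),
     (2 * a, [(i, bar i), (bar j, j)]), (2 * b, [(k, bar k), (bar l, l)]),
     (2 * (a + b), [(k, bar k), (bar j, j), (i, l), (i, l)]),
     (2 * (a + b), [(i, bar i), (k, bar k), (bar j, l), (bar j, l)]),
     (2 * (a + b), [(bar j, j), (bar l, l), (i, bar k), (i, bar k)]),
     (2 * (a + b), [(i, bar i), (bar l, l), (k, j), (k, j)])]"

lemma eventually_ereal_le:
  fixes f :: "real \<Rightarrow> real"
  assumes "continuous (at_right 0) f" and "ereal (f 0) < t"
  shows "\<forall>\<^sub>F e in at_right 0. ereal (f e) \<le> t"
proof (cases t)
  case (real s)
  have "(f \<longlongrightarrow> f 0) (at_right 0)"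
    using assms(1) by (simp add: continuous_within)
  then have "\<forall>\<^sub>F e in at_right 0. f e < s"
    using assms(2) real by (intro order_tendstoD) auto
  then show ?thesis
    using real by (auto elim!: eventually_mono)
qed (use assms in auto)

lemma ereal_double_add_le:
  "2 * y \<le> p + q \<Longrightarrow> ereal c \<le> x + y \<Longrightarrow> ereal (2 * c) \<le> p + q + x + x"
proof -
  assume strong: "2 * y \<le> p + q" and c: "ereal c \<le> x + y"
  have "ereal (2 * c) \<le> (x + y) + (x + y)"
    using add_mono[OF c c] by simp
  also have "\<dots> = x + x + (y + y)" by (simp add: ac_simps)
  also have "\<dots> = x + x + 2 * y" by (simp only: ereal_two_times)
  also have "\<dots> \<le> x + x + (p + q)" using strong by (rule add_left_mono)
  finally show ?thesis by (simp add: ac_simps)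
qed

lemma path_bounds_strong_closure:
  assumes w: "strongly_closed_coherent n w"
    and nodes: "i \<in> nodes n" "j \<in> nodes n" "k \<in> nodes n" "l \<in> nodes n"
    and bounds: "path_bounds w (take 8 (pair_pair_bounds i j k l a b))"
  shows "path_bounds w (pair_pair_bounds i j k l a b)"
proof -
  have strong: "2 * w x y \<le> w x (bar x) + w (bar y) y" if "x \<in> nodes n" "y \<in> nodes n" for x y
    using w that by (simp add: strongly_closed_coherent_def)
  have N: "ereal a \<le> w i j" "ereal b \<le> w k l"
    "ereal (a + b) \<le> w i l + w k j" "ereal (a + b) \<le> w i (bar k) + w (bar j) l"
    using bounds by (simp_all add: path_bounds_def pair_pair_bounds_def)
  have "ereal (2 * a) \<le> w i (bar i) + w (bar j) j" "ereal (2 * b) \<le> w k (bar k) + w (bar l) l"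
    by (rule ereal_double_le[OF N(1) strong[OF nodes(1,2)]] ereal_double_le[OF N(2) strong[OF nodes(3,4)]])+
  moreover have "ereal (2 * (a + b)) \<le> w k (bar k) + w (bar j) j + w i l + w i l"
    by (rule ereal_double_add_le[OF strong[OF nodes(3,2)] N(3)])
  moreover have "ereal (2 * (a + b)) \<le> w i (bar i) + w k (bar k) + w (bar j) l + w (bar j) l"
    using ereal_double_add_le[OF strong[OF nodes(1) bar_in_nodes[OF nodes(3)]], of "a + b"] N(4)
    by (simp add: add.commute)
  moreover have "ereal (2 * (a + b)) \<le> w (bar j) j + w (bar l) l + w i (bar k) + w i (bar k)"
    using ereal_double_add_le[OF strong[OF bar_in_nodes[OF nodes(2)] nodes(4)], of "a + b"] N(4)
    by simp
  moreover have "ereal (2 * (a + b)) \<le> w i (bar i) + w (bar l) l + w k j + w k j"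
    using ereal_double_add_le[OF strong[OF nodes(1,4)], of "a + b"] N(3) by (simp add: add.commute)
  ultimately show ?thesis
    using bounds by (simp add: path_bounds_def pair_pair_bounds_def add.assoc)
qed

lemma join_conditions_margin:
  fixes w1 w2 :: graph
  defines "w \<equiv> graph_join w1 w2"
  assumes w: "strongly_closed_coherent n w"
    and nodes: "i \<in> nodes n" "j \<in> nodes n" "k \<in> nodes n" "l \<in> nodes n"
    and cond: "join_conditions w1 w2 w i j k l"
    and A: "w1 i j = ereal a0" and B: "w2 k l = ereal b0"
  obtains a b where "a0 < a" and "b0 < b" and "path_bounds w (pair_pair_bounds i j k l a b)"
proof -
  have "ereal a0 < w i j" "ereal b0 < w k l"
    using cond A B by (auto simp: join_conditions_def w_def graph_join_def less_max_iff_disj)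
  then have "\<forall>\<^sub>F e in at_right 0. 0 < e \<and>
      path_bounds w (take 8 (pair_pair_bounds i j k l (a0 + e) (b0 + e)))"
    using cond A B unfolding join_conditions_def path_bounds_def pair_pair_bounds_def
    by simp (intro eventually_conj eventually_at_right_less eventually_ereal_le continuous_intros;
        simp add: algebra_simps)
  then obtain e where "0 < e" and "path_bounds w (take 8 (pair_pair_bounds i j k l (a0 + e) (b0 + e)))"
    using eventually_happens'[OF trivial_limit_at_right_real] by blast
  then show ?thesis
    using path_bounds_strong_closure[OF w nodes] that[of "a0 + e" "b0 + e"] by simp
qed

lemma sum_list_ereal: "(\<Sum>x\<leftarrow>xs. ereal (f x)) = ereal (\<Sum>x\<leftarrow>xs. f x)"
  by (induction xs) auto

text \<open>Capping each summand at \<open>e x + M\<close> keeps a lower bound on the sum as soon as \<open>M\<close> exceeds the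
  bound plus all the \<open>|e x|\<close>: a single capped summand already contributes enough.\<close>

lemma sum_list_min_ge:
  fixes A :: "'a \<Rightarrow> ereal" and e :: "'a \<Rightarrow> real"
  assumes e_le: "\<And>x. x \<in> set xs \<Longrightarrow> ereal (e x) \<le> A x"
    and c: "ereal c \<le> (\<Sum>x\<leftarrow>xs. A x)" and M: "\<bar>c\<bar> + (\<Sum>x\<leftarrow>xs. \<bar>e x\<bar>) \<le> M"
  shows "c \<le> (\<Sum>x\<leftarrow>xs. real_of_ereal (min (A x) (ereal (e x + M))))"
proof -
  define T where "T x = real_of_ereal (min (A x) (ereal (e x + M)))" for x
  have "0 \<le> (\<Sum>x\<leftarrow>xs. \<bar>e x\<bar>)" by (rule sum_list_nonneg) auto
  then have M0: "0 \<le> M" using M by linarith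
  have T: "ereal (T x) = min (A x) (ereal (e x + M))" if "x \<in> set xs" for x
    using e_le[OF that] M0 unfolding T_def by (cases "A x") (auto simp: min_def)
  have e_T: "e x \<le> T x" if "x \<in> set xs" for x
  proof -
    have "ereal (e x) \<le> min (A x) (ereal (e x + M))" using e_le[OF that] M0 by simp
    also have "\<dots> = ereal (T x)" using T[OF that] by simp
    finally show ?thesis by simp
  qed
  show ?thesis
  proof (cases "\<exists>x0\<in>set xs. ereal (e x0 + M) < A x0")
    case True
    then obtain x0 where x0: "x0 \<in> set xs" and big: "ereal (e x0 + M) < A x0" by blast
    have "M = T x0 - e x0" using T[OF x0] big by simp
    also have "\<dots> \<le> (\<Sum>x\<leftarrow>xs. T x - e x)"
      using x0 e_T by (intro member_le_sum_list) auto
    also have "\<dots> = (\<Sum>x\<leftarrow>xs. T x) - (\<Sum>x\<leftarrow>xs. e x)" by (simp add: sum_list_subtractf)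
    finally have "M \<le> (\<Sum>x\<leftarrow>xs. T x) - (\<Sum>x\<leftarrow>xs. e x)" .
    moreover have "0 \<le> (\<Sum>x\<leftarrow>xs. e x) + (\<Sum>x\<leftarrow>xs. \<bar>e x\<bar>)"
      unfolding sum_list_addf[symmetric] by (intro sum_list_nonneg) auto
    ultimately show ?thesis using M unfolding T_def by linarith
  next
    case False
    then have "A x = ereal (T x)" if "x \<in> set xs" for x
      using T[OF that] that by (auto simp: min_def not_less)
    then have "(\<Sum>x\<leftarrow>xs. A x) = (\<Sum>x\<leftarrow>xs. ereal (T x))"
      by (intro arg_cong[where f = sum_list] map_cong) simp_all
    also have "\<dots> = ereal (\<Sum>x\<leftarrow>xs. T x)" by (rule sum_list_ereal)
    finally show ?thesis using c unfolding T_def by simp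
  qed
qed

definition truncate :: "real \<Rightarrow> (nat \<Rightarrow> real) \<Rightarrow> graph \<Rightarrow> nat \<Rightarrow> nat \<Rightarrow> real" where
  "truncate M z w x y = real_of_ereal (min (w x y) (ereal (pi_node x z - pi_node y z + M)))"

lemma truncate_eq:
  assumes "diff_graph z x y \<le> w x y" and "0 \<le> M"
  shows "ereal (truncate M z w x y) = min (w x y) (ereal (pi_node x z - pi_node y z + M))"
  using assms by (cases "w x y") (auto simp: truncate_def diff_graph_def min_def)

lemma truncate_le: "diff_graph z x y \<le> w x y \<Longrightarrow> 0 \<le> M \<Longrightarrow> ereal (truncate M z w x y) \<le> w x y"
  by (simp add: truncate_eq)

lemma coherent_truncate:
  assumes "coherent n w"
  shows "coherent n (\<lambda>x y. ereal (truncate M z w x y))"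
  using assms by (simp add: coherent_def truncate_def)

lemma proper_closed_truncate:
  assumes w: "proper_closed n w" and z: "\<And>x y. x \<in> nodes n \<Longrightarrow> y \<in> nodes n \<Longrightarrow> diff_graph z x y \<le> w x y"
    and M: "0 \<le> M"
  shows "proper_closed n (\<lambda>x y. ereal (truncate M z w x y))"
proof (rule proper_closedI)
  define D where "D x y = ereal (pi_node x z - pi_node y z + M)" for x y
  have eq: "ereal (truncate M z w x y) = min (w x y) (D x y)" if "x \<in> nodes n" "y \<in> nodes n" for x y
    unfolding D_def using z[OF that] M by (rule truncate_eq)
  fix x assume x: "x \<in> nodes n"
  show "ereal (truncate M z w x x) = 0"
    unfolding eq[OF x x] D_def using proper_closed_diag[OF w x] M by (simp add: min_def)
  fix y assume y: "y \<in> nodes n"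
  show "ereal (truncate M z w x y) \<noteq> -\<infinity>" by simp
  fix v assume v: "v \<in> nodes n"
  show "ereal (truncate M z w x y) \<le> ereal (truncate M z w x v) + ereal (truncate M z w v y)"
    unfolding eq[OF x y] eq[OF x v] eq[OF v y]
  proof (rule le_min_add_min)
    show "min (w x y) (D x y) \<le> w x v + w v y"
      using proper_closed_triangle[OF w x y v] by (simp add: min.coboundedI1)
    have "D x y = diff_graph z x v + D v y" by (simp add: D_def diff_graph_def)
    then show "min (w x y) (D x y) \<le> w x v + D v y"
      using z[OF x v] by (simp add: add_right_mono min.coboundedI2)
    have "D x y = D x v + diff_graph z v y" by (simp add: D_def diff_graph_def)
    then show "min (w x y) (D x y) \<le> D x v + w v y"
      using z[OF v y] by (simp add: add_left_mono min.coboundedI2)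
    have "D x y \<le> D x v + D v y" using M by (simp add: D_def)
    then show "min (w x y) (D x y) \<le> D x v + D v y" by (simp add: min.coboundedI2)
  qed
qed

lemma path_bounds_truncate:
  assumes z: "\<And>x y. x \<in> nodes n \<Longrightarrow> y \<in> nodes n \<Longrightarrow> diff_graph z x y \<le> w x y"
    and cs: "\<forall>(c, ps)\<in>set cs. set ps \<subseteq> nodes n \<times> nodes n" and bounds: "path_bounds w cs"
    and M: "(\<Sum>(c, ps)\<leftarrow>cs. \<bar>c\<bar> + (\<Sum>(x, y)\<leftarrow>ps. \<bar>pi_node x z - pi_node y z\<bar>)) \<le> M"
  shows "path_bounds (\<lambda>x y. ereal (truncate M z w x y)) cs"
  unfolding path_bounds_def split_def
proof
  fix cps assume cps: "cps \<in> set cs"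
  define bound where "bound cps = \<bar>fst cps\<bar> + (\<Sum>p\<leftarrow>snd cps. \<bar>pi_node (fst p) z - pi_node (snd p) z\<bar>)"
    for cps :: "real \<times> (nat \<times> nat) list"
  have "bound cps \<le> (\<Sum>cps\<leftarrow>cs. bound cps)"
    using cps by (intro member_le_sum_list) (auto simp: bound_def intro!: add_nonneg_nonneg sum_list_nonneg)
  also have "\<dots> \<le> M" using M by (simp add: bound_def split_def)
  finally have M_cps: "\<bar>fst cps\<bar> + (\<Sum>p\<leftarrow>snd cps. \<bar>pi_node (fst p) z - pi_node (snd p) z\<bar>) \<le> M"
    by (simp add: bound_def)
  have "fst cps \<le> (\<Sum>p\<leftarrow>snd cps. truncate M z w (fst p) (snd p))"
    unfolding truncate_def
  proof (rule sum_list_min_ge[OF _ _ M_cps])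
    fix p assume "p \<in> set (snd cps)"
    moreover have "set (snd cps) \<subseteq> nodes n \<times> nodes n" using cs cps by (auto simp: split_def)
    ultimately have "fst p \<in> nodes n" "snd p \<in> nodes n" by (auto simp: mem_Times_iff)
    then show "ereal (pi_node (fst p) z - pi_node (snd p) z) \<le> w (fst p) (snd p)"
      using z by (simp add: diff_graph_def)
  next
    show "ereal (fst cps) \<le> (\<Sum>p\<leftarrow>snd cps. w (fst p) (snd p))"
      using bounds cps by (auto simp: path_bounds_def split_def)
  qed
  then show "ereal (fst cps) \<le> (\<Sum>p\<leftarrow>snd cps. ereal (truncate M z w (fst p) (snd p)))"
    by (simp add: sum_list_ereal)
qed

text \<open>Expanding the two minima of \<open>add_pair\<close> leaves linear inequalities between the weights, each
  bounded below by at most two of the path bounds, read through coherence.\<close>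

lemma add_pair_admits_pair:
  fixes V :: "nat \<Rightarrow> nat \<Rightarrow> real" and i j k l :: nat and a b :: real
  defines "u \<equiv> add_pair (\<lambda>x y. ereal (V x y)) i j a"
  assumes coh: "coherent n (\<lambda>x y. ereal (V x y))"
    and nodes: "i \<in> nodes n" "j \<in> nodes n" "k \<in> nodes n" "l \<in> nodes n"
    and bounds: "path_bounds (\<lambda>x y. ereal (V x y)) (pair_pair_bounds i j k l a b)"
  shows "ereal b \<le> u k l" and "ereal b \<le> u (bar l) (bar k)"
    and "ereal (2 * b) \<le> u k (bar k) + u (bar l) l"
proof -
  have sym: "V (bar y) (bar x) = V x y" if "x \<in> nodes n" "y \<in> nodes n" for x y
    using coh that by (simp add: coherent_def)
  note syms = sym[OF nodes(1) bar_in_nodes[OF nodes(3)], unfolded bar_bar] sym[OF nodes(3,4)]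
    sym[OF bar_in_nodes[OF nodes(2)] nodes(4), unfolded bar_bar] sym[OF nodes(1,4)] sym[OF nodes(3,2)]
  note real_bounds = bounds[unfolded path_bounds_def pair_pair_bounds_def, simplified]
  note expand = u_def add_pair_def add_arc_def ereal_min[symmetric] plus_ereal.simps(1)
    ereal_less_eq(3) min_add_distrib_left min_add_distrib_right min.bounded_iff
  show "ereal b \<le> u k l"
    unfolding expand by (intro conjI; smt (verit) real_bounds syms)+
  show "ereal b \<le> u (bar l) (bar k)"
    unfolding expand by (intro conjI; smt (verit) real_bounds syms)+
  show "ereal (2 * b) \<le> u k (bar k) + u (bar l) l"
    unfolding expand by (intro conjI; smt (verit) real_bounds syms)+
qed

lemma point_beyond_pairs:
  fixes V :: "nat \<Rightarrow> nat \<Rightarrow> real"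
  defines "W \<equiv> \<lambda>x y. ereal (V x y)"
  assumes W_cl: "proper_closed n W" and W_coh: "coherent n W"
    and W_le: "\<And>x y. x \<in> nodes n \<Longrightarrow> y \<in> nodes n \<Longrightarrow> W x y \<le> w x y" and w_coh: "coherent n w"
    and nodes: "i \<in> nodes n" "j \<in> nodes n" "k \<in> nodes n" "l \<in> nodes n"
    and bounds: "path_bounds W (pair_pair_bounds i j k l a b)"
  obtains p where "p \<in> gamma n w" and "a \<le> pi_node i p - pi_node j p"
    and "b \<le> pi_node k p - pi_node l p"
proof -
  define u where "u = add_pair W i j a"
  have u_cl: "proper_closed n u"
    unfolding u_def
  proof (rule proper_closed_add_pair[OF W_cl nodes(1,2)])
    show "ereal a \<le> W i j" using bounds by (simp add: path_bounds_def pair_pair_bounds_def)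
    then show "ereal a \<le> W (bar j) (bar i)" using W_coh nodes by (simp add: coherent_def)
    show "ereal (2 * a) \<le> W i (bar i) + W (bar j) j"
      using bounds by (simp add: path_bounds_def pair_pair_bounds_def)
  qed
  have u_bounds: "ereal b \<le> u k l" "ereal b \<le> u (bar l) (bar k)"
    "ereal (2 * b) \<le> u k (bar k) + u (bar l) l"
    unfolding u_def W_def
    by (rule add_pair_admits_pair[OF W_coh[unfolded W_def] nodes bounds[unfolded W_def]])+
  define v where "v = add_pair u k l b"
  have v_cl: "proper_closed n v"
    unfolding v_def by (rule proper_closed_add_pair[OF u_cl nodes(3,4) u_bounds])
  have v_le_u: "v x y \<le> u x y" for x y
    unfolding v_def by (rule add_pair_le)
  have v_le_w: "v x y \<le> w x y" if "x \<in> nodes n" "y \<in> nodes n" for x y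
    using v_le_u[of x y] add_pair_le[of W i j a x y] W_le[OF that] unfolding u_def
    by (meson order_trans)
  obtain p where p: "p \<in> Rn n"
    and bound: "\<And>x y. x \<in> nodes n \<Longrightarrow> y \<in> nodes n \<Longrightarrow>
           ereal (pi_node x p - pi_node y p) \<le> max (v x y) (v (bar y) (bar x))"
    by (rule proper_closed_point[OF v_cl]) (rule that)
  show ?thesis
  proof
    show "p \<in> gamma n w"
      by (rule point_in_gamma[OF p bound v_le_w w_coh])
    have "max (v j i) (v (bar i) (bar j)) \<le> ereal (-a)"
      using order_trans[OF v_le_u add_pair_at(1)[OF W_cl nodes(1,2), of a, folded u_def]]
        order_trans[OF v_le_u add_pair_at(2)[OF W_cl nodes(1,2), of a, folded u_def]]
      by simp
    then have "ereal (pi_node j p - pi_node i p) \<le> ereal (-a)"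
      by (rule order_trans[OF bound[OF nodes(2,1)]])
    then show "a \<le> pi_node i p - pi_node j p" by simp
    have "max (v l k) (v (bar k) (bar l)) \<le> ereal (-b)"
      using add_pair_at[OF u_cl nodes(3,4), of b] by (simp add: v_def)
    then have "ereal (pi_node l p - pi_node k p) \<le> ereal (-b)"
      by (rule order_trans[OF bound[OF nodes(4,3)]])
    then show "b \<le> pi_node k p - pi_node l p" by simp
  qed
qed

text \<open>The weights of the join may be infinite; truncating them at a point \<open>z\<close> of the join gives
  real weights for which the path bounds survive.\<close>

lemma point_beyond_if_join_conditions:
  fixes w1 w2 :: graph
  defines "w \<equiv> graph_join w1 w2"
  assumes w1: "strongly_closed_coherent n w1" and w2: "strongly_closed_coherent n w2"
    and z: "z \<in> gamma n w"
    and nodes: "i \<in> nodes n" "j \<in> nodes n" "k \<in> nodes n" "l \<in> nodes n"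
    and cond: "join_conditions w1 w2 w i j k l"
    and A: "w1 i j = ereal a0" and B: "w2 k l = ereal b0"
  obtains p where "p \<in> gamma n w" and "a0 < pi_node i p - pi_node j p"
    and "b0 < pi_node k p - pi_node l p"
proof -
  have w: "strongly_closed_coherent n w"
    unfolding w_def by (rule strongly_closed_coherent_join[OF w1 w2])
  then have w_cl: "proper_closed n w" and w_coh: "coherent n w"
    by (simp_all add: strongly_closed_coherent_def)
  obtain a b where ab: "a0 < a" "b0 < b" and bounds: "path_bounds w (pair_pair_bounds i j k l a b)"
    using join_conditions_margin[OF w[unfolded w_def] nodes cond[unfolded w_def] A B]
    unfolding w_def by blast
  have z_le: "diff_graph z x y \<le> w x y" if "x \<in> nodes n" "y \<in> nodes n" for x y
    using z that by (simp add: gamma_def diff_graph_def)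
  define M where "M = (\<Sum>(c, ps)\<leftarrow>pair_pair_bounds i j k l a b.
    \<bar>c\<bar> + (\<Sum>(x, y)\<leftarrow>ps. \<bar>pi_node x z - pi_node y z\<bar>))"
  have M0: "0 \<le> M"
    unfolding M_def by (force intro: sum_list_nonneg add_nonneg_nonneg)
  obtain p where "p \<in> gamma n w" "a \<le> pi_node i p - pi_node j p" "b \<le> pi_node k p - pi_node l p"
  proof (rule point_beyond_pairs[where V = "truncate M z w"])
    show "proper_closed n (\<lambda>x y. ereal (truncate M z w x y))"
      by (rule proper_closed_truncate[OF w_cl z_le M0])
    show "coherent n (\<lambda>x y. ereal (truncate M z w x y))"
      by (rule coherent_truncate[OF w_coh])
    show "ereal (truncate M z w x y) \<le> w x y" if "x \<in> nodes n" "y \<in> nodes n" for x y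
      using z_le[OF that] M0 by (rule truncate_le)
    show "path_bounds (\<lambda>x y. ereal (truncate M z w x y)) (pair_pair_bounds i j k l a b)"
      using nodes bar_in_nodes
      by (intro path_bounds_truncate[OF z_le _ bounds]) (auto simp: pair_pair_bounds_def M_def)
  qed (use w_coh nodes in auto)
  then show ?thesis using ab that by force
qed

lemma not_in_gamma:
  assumes "i \<in> nodes n" and "j \<in> nodes n" and "w i j = ereal a" and "a < pi_node i p - pi_node j p"
  shows "p \<notin> gamma n w"
proof
  assume "p \<in> gamma n w"
  then have "ereal (pi_node i p - pi_node j p) \<le> w i j" using assms(1,2) by (simp add: gamma_def)
  then show False using assms(3,4) by simp
qed

lemma subgraph_arc_real:
  assumes "subgraph n r w" and "proper_closed n w"
    and "i \<in> nodes n" and "j \<in> nodes n" and "is_arc r i j"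
  obtains A where "w i j = ereal A"
  using assms proper_closed_not_minf[OF assms(2,3,4)]
  by (cases "w i j") (auto simp: subgraph_def is_arc_def)

lemma violated_arc:
  assumes p: "p \<in> Rn n" and beyond: "p \<notin> gamma n r"
    and sub: "subgraph n r w" and w: "proper_closed n w"
  obtains i j A where "i \<in> nodes n" and "j \<in> nodes n" and "is_arc r i j"
    and "w i j = ereal A" and "A < pi_node i p - pi_node j p"
proof -
  obtain i j where i: "i \<in> nodes n" and j: "j \<in> nodes n"
    and less: "r i j < ereal (pi_node i p - pi_node j p)"
    using p beyond by (auto simp: gamma_def not_le)
  then have arc: "is_arc r i j" by (auto simp: is_arc_def)
  then obtain A where A: "w i j = ereal A" by (rule subgraph_arc_real[OF sub w i j])
  have "r i j = w i j" using sub i j arc by (simp add: subgraph_def)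
  then show ?thesis using that[OF i j arc A] less A by simp
qed

lemma join_conditions_if_beyond_union:
  assumes w: "w = graph_join w1 w2"
    and cl1: "proper_closed n w1" and sub1: "subgraph n r1 w1" and r1: "gamma n r1 \<subseteq> gamma n w1"
    and cl2: "proper_closed n w2" and sub2: "subgraph n r2 w2" and r2: "gamma n r2 \<subseteq> gamma n w2"
    and p: "p \<in> gamma n w" and beyond: "p \<notin> gamma n w1" "p \<notin> gamma n w2"
  shows "\<exists>i\<in>nodes n. \<exists>j\<in>nodes n. \<exists>k\<in>nodes n. \<exists>l\<in>nodes n.
    is_arc r1 i j \<and> is_arc r2 k l \<and> join_conditions w1 w2 w i j k l"
proof -
  have pR: "p \<in> Rn n" using p by (simp add: gamma_def)
  have "p \<notin> gamma n r1" "p \<notin> gamma n r2" using beyond r1 r2 by blast+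
  obtain i j A where ij: "i \<in> nodes n" "j \<in> nodes n" and arc1: "is_arc r1 i j"
    and A: "w1 i j = ereal A" "A < pi_node i p - pi_node j p"
    by (rule violated_arc[OF pR \<open>p \<notin> gamma n r1\<close> sub1 cl1])
  obtain k l B where kl: "k \<in> nodes n" "l \<in> nodes n" and arc2: "is_arc r2 k l"
    and B: "w2 k l = ereal B" "B < pi_node k p - pi_node l p"
    by (rule violated_arc[OF pR \<open>p \<notin> gamma n r2\<close> sub2 cl2])
  have "join_conditions w1 w2 w i j k l"
    using join_conditions_if_beyond[OF p[unfolded w] ij kl A B] w by simp
  with ij kl arc1 arc2 show ?thesis by blast
qed

lemma beyond_union_if_join_conditions:
  assumes w: "w = graph_join w1 w2"
    and w1: "strongly_closed_coherent n w1" and sub1: "subgraph n r1 w1" and ne: "gamma n w1 \<noteq> {}"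
    and w2: "strongly_closed_coherent n w2" and sub2: "subgraph n r2 w2"
    and nodes: "i \<in> nodes n" "j \<in> nodes n" "k \<in> nodes n" "l \<in> nodes n"
    and arcs: "is_arc r1 i j" "is_arc r2 k l" and cond: "join_conditions w1 w2 w i j k l"
  shows "\<exists>p\<in>gamma n w. p \<notin> gamma n w1 \<and> p \<notin> gamma n w2"
proof -
  have cl1: "proper_closed n w1" and cl2: "proper_closed n w2"
    using w1 w2 by (simp_all add: strongly_closed_coherent_def)
  obtain a0 b0 where A: "w1 i j = ereal a0" and B: "w2 k l = ereal b0"
    using subgraph_arc_real[OF sub1 cl1 nodes(1,2) arcs(1)]
      subgraph_arc_real[OF sub2 cl2 nodes(3,4) arcs(2)] by metis
  obtain z where "z \<in> gamma n w"
    using ne gamma_subset_gamma_join w by blast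
  then obtain p where p: "p \<in> gamma n w"
    and ij: "a0 < pi_node i p - pi_node j p" and kl: "b0 < pi_node k p - pi_node l p"
    using point_beyond_if_join_conditions[OF w1 w2 _ nodes _ A B] cond w by metis
  have "p \<notin> gamma n w1" and "p \<notin> gamma n w2"
    using not_in_gamma[of i n j w1 a0 p] not_in_gamma[of k n l w2 b0 p] nodes A B ij kl by simp_all
  with p show ?thesis by blast
qed

theorem theorem8:
  fixes n :: nat and oct1 oct2 :: "(nat \<Rightarrow> real) set" and w1 w2 r1 r2 :: graph
  assumes "oct_shape n oct1" and "oct_shape n oct2"
    and "oct1 \<noteq> {}" and "oct2 \<noteq> {}"
    and "octagonal n w1" and "strongly_closed n w1" and "oct1 = gamma n w1"
    and "octagonal n w2" and "strongly_closed n w2" and "oct2 = gamma n w2"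
    and "subgraph n r1 w1" and "\<forall>i\<in>nodes n. \<forall>j\<in>nodes n. S_closure n r1 i j = w1 i j"
    and "subgraph n r2 w2" and "\<forall>i\<in>nodes n. \<forall>j\<in>nodes n. S_closure n r2 i j = w2 i j"
    and "w = graph_join w1 w2"
  shows "oct_hull n (oct1 \<union> oct2) \<noteq> oct1 \<union> oct2 \<longleftrightarrow>
    (\<exists>i\<in>nodes n. \<exists>j\<in>nodes n. \<exists>k\<in>nodes n. \<exists>l\<in>nodes n.
       is_arc r1 i j \<and> is_arc r2 k l \<and>
       w1 i j < w2 i j \<and>
       w2 k l < w1 k l \<and>
       w1 i j + w2 k l < w i l + w k j \<and>
       w1 i j + w2 k l < w i (bar k) + w (bar j) l \<and>
       2 * w1 i j + w2 k l < w i l + w i (bar k) + w (bar j) j \<and>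
       2 * w1 i j + w2 k l < w k j + w (bar j) l + w i (bar i) \<and>
       w1 i j + 2 * w2 k l < w i l + w (bar j) l + w k (bar k) \<and>
       w1 i j + 2 * w2 k l < w k j + w i (bar k) + w (bar l) l)"
proof -
  have w1: "strongly_closed_coherent n w1" and w2: "strongly_closed_coherent n w2"
    using assms(5,6,8,9) by (simp_all add: strongly_closed_coherentI)
  have rat1: "is_graph n w1" and rat2: "is_graph n w2"
    using assms(5,8) by (simp_all add: octagonal_def)
  have cl1: "proper_closed n w1" and cl2: "proper_closed n w2"
    using w1 w2 by (simp_all add: strongly_closed_coherent_def)
  have r1: "gamma n r1 \<subseteq> gamma n w1" and r2: "gamma n r2 \<subseteq> gamma n w2"
    by (rule gamma_subset_gamma_S_closure[OF w1 rat1 assms(11,12)]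
        gamma_subset_gamma_S_closure[OF w2 rat2 assms(13,14)])+
  have "oct_hull n (oct1 \<union> oct2) = gamma n w"
    using oct_hull_union_gamma[OF w1 w2 rat1 rat2] assms(7,10,15) by simp
  then have "oct_hull n (oct1 \<union> oct2) \<noteq> oct1 \<union> oct2 \<longleftrightarrow>
      (\<exists>p\<in>gamma n w. p \<notin> gamma n w1 \<and> p \<notin> gamma n w2)"
    using gamma_subset_gamma_join[of n w1 w2] assms(7,10,15) by blast
  also have "\<dots> \<longleftrightarrow> (\<exists>i\<in>nodes n. \<exists>j\<in>nodes n. \<exists>k\<in>nodes n. \<exists>l\<in>nodes n.
      is_arc r1 i j \<and> is_arc r2 k l \<and> join_conditions w1 w2 w i j k l)"
    using join_conditions_if_beyond_union[OF assms(15) cl1 assms(11) r1 cl2 assms(13) r2]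
      beyond_union_if_join_conditions[OF assms(15) w1 assms(11) _ w2 assms(13)] assms(3,7)
    by (intro iffI) blast+
  finally show ?thesis unfolding join_conditions_def .
qed

end
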